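(* Let $\alpha\ge 0$, let $K\subset\mathbb{R}^d$ be a compact set with $\mathcal{H}^{\alpha}(K)<a$ (where $a>0$), and let $\varepsilon>0$. Then there exist a natural number $M$ and a family $\mathfrak{B}$ of closed balls such that: 1) $\mathfrak{B}$ covers $K$; 2) the center of every ball in $\mathfrak{B}$ lies in $K$ and its radius does not exceed $\varepsilon$; 3) $|\mathfrak{B}|=M$ and $\sum_{\overline{B}_{r_i}(x_i)\in\mathfrak{B}} r_i^{\alpha}<a$; 4) for every family $\mathfrak{B}'$ of closed balls satisfying 1), 2), 3) one has $\sum_{\overline{B}_{r_i}(x_i)\in\mathfrak{B}} r_i^{\alpha}\leq\sum_{\overline{B}_{r_i}(x_i)\in\mathfrak{B}'} r_i^{\alpha}$.
   Context: $\overline{B}_r(x)$ denotes the closed ball of radius $r\ge 0$ centered at $x$; $\mathcal{H}^\alpha$ is the $\alpha$-dimensional Hausdorff measure. The number $M$ may depend on $K$ and $\varepsilon$; in condition 3) for $\mathfrak{B}'$, the same $M$ is used. *)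

theory Defs
  imports "HOL-Analysis.Analysis"
begin

text \<open>Power with the convention 0^0 = 1 (as in the paper); for alpha > 0 this is powr.\<close>
definition rpow :: "real \<Rightarrow> real \<Rightarrow> real" where
  "rpow r \<alpha> = (if \<alpha> = 0 then 1 else r powr \<alpha>)"

definition hcost :: "real \<Rightarrow> 'a::metric_space set \<Rightarrow> real" where
  "hcost \<alpha> U = (if U = {} then 0 else rpow (diameter U) \<alpha>)"

definition hausdorff_pre :: "real \<Rightarrow> real \<Rightarrow> 'a::metric_space set \<Rightarrow> ennreal" where
  "hausdorff_pre \<alpha> \<delta> K =
     (INF U \<in> {U :: nat \<Rightarrow> 'a set. K \<subseteq> (\<Union>i. U i) \<and> (\<forall>i. bounded (U i) \<and> diameter (U i) \<le> \<delta>)}.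
        (\<Sum>i. ennreal (hcost \<alpha> (U i))))"

definition hausdorff_measure :: "real \<Rightarrow> 'a::metric_space set \<Rightarrow> ennreal" where
  "hausdorff_measure \<alpha> K = (SUP \<delta> \<in> {0<..}. hausdorff_pre \<alpha> \<delta> K)"

text \<open>A finite family of closed balls is represented by the set of its (center, radius) pairs.\<close>
definition good_family :: "real \<Rightarrow> 'a::euclidean_space set \<Rightarrow> real \<Rightarrow> real \<Rightarrow> nat \<Rightarrow> ('a \<times> real) set \<Rightarrow> bool" where
  "good_family \<alpha> K a \<epsilon> M B \<longleftrightarrow>
     finite B \<and>
     K \<subseteq> (\<Union>(x, r)\<in>B. cball x r) \<and>
     (\<forall>(x, r)\<in>B. x \<in> K \<and> 0 \<le> r \<and> r \<le> \<epsilon>) \<and>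
     card B = M \<and> (\<Sum>(x, r)\<in>B. rpow r \<alpha>) < a"

end

theory Submission
  imports Defs
begin

(*
  Since the approximate Hausdorff content of K is below a, K is covered by countably many sets U_i
  of small diameter with \<Sum> diam(U_i)^\<alpha> < a. Replacing each U_i that meets K by a slightly
  larger ball centred at a point of K and using compactness gives a finite admissible family of
  balls, with M elements say.

  For \<alpha> > 0 and infinite K, families of M balls are parametrised by the M-tuples (x_i, r_i) in
  K \<times> [0, \<epsilon>] whose balls cover K. Covering is a closed condition, so these tuples form a compact
  set, on which \<Sum> r_i^\<alpha> is continuous and hence attains its minimum. For \<alpha> = 0 the sum is just M,
  and for finite K the balls of radius 0 around its points cost nothing.
*)

abbreviation family_cost :: "real \<Rightarrow> ('a \<times> real) set \<Rightarrow> real" where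
  "family_cost \<alpha> B \<equiv> \<Sum>(x, r)\<in>B. rpow r \<alpha>"

abbreviation tuple_cost :: "real \<Rightarrow> nat \<Rightarrow> (nat \<Rightarrow> 'a \<times> real) \<Rightarrow> real" where
  "tuple_cost \<alpha> M f \<equiv> \<Sum>i<M. rpow (snd (f i)) \<alpha>"

lemma rpow_nonneg: "0 \<le> rpow r \<alpha>"
  by (simp add: rpow_def)

lemma family_cost_nonneg: "0 \<le> family_cost \<alpha> B"
  by (simp add: sum_nonneg rpow_nonneg case_prod_beta)

lemma hcost_nonneg: "0 \<le> hcost \<alpha> U"
  by (simp add: hcost_def rpow_nonneg)

lemma hausdorff_measure_less_imp_cover:
  fixes K :: "'a::metric_space set"
  assumes "hausdorff_measure \<alpha> K < ennreal a" and "\<delta> > 0"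
  obtains U :: "nat \<Rightarrow> 'a set"
  where "K \<subseteq> (\<Union>i. U i)" "\<And>i. bounded (U i)" "\<And>i. diameter (U i) \<le> \<delta>"
    "summable (\<lambda>i. hcost \<alpha> (U i))" "(\<Sum>i. hcost \<alpha> (U i)) < a"
proof -
  have "hausdorff_pre \<alpha> \<delta> K \<le> hausdorff_measure \<alpha> K"
    unfolding hausdorff_measure_def using assms(2) by (intro SUP_upper) auto
  then have "hausdorff_pre \<alpha> \<delta> K < ennreal a" using assms(1) by order
  then obtain U :: "nat \<Rightarrow> 'a set" where U: "K \<subseteq> (\<Union>i. U i)" "\<And>i. bounded (U i)"
    "\<And>i. diameter (U i) \<le> \<delta>" and less: "(\<Sum>i. ennreal (hcost \<alpha> (U i))) < ennreal a"
    unfolding hausdorff_pre_def INF_less_iff by blast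
  have summable: "summable (\<lambda>i. hcost \<alpha> (U i))"
    using less by (intro summable_suminf_not_top) (auto simp: hcost_nonneg)
  have "ennreal (\<Sum>i. hcost \<alpha> (U i)) < ennreal a"
    using less by (simp add: suminf_ennreal2[OF hcost_nonneg summable])
  then have "(\<Sum>i. hcost \<alpha> (U i)) < a"
    using summable by (simp add: ennreal_less_iff suminf_nonneg hcost_nonneg)
  with U summable show thesis by (rule that)
qed

lemma ex_radius_above_diameter:
  assumes "0 \<le> \<alpha>" "U \<noteq> {}" "bounded U" "diameter U < \<epsilon>" "e > 0"
  obtains \<rho> where "diameter U < \<rho>" "\<rho> \<le> \<epsilon>" "rpow \<rho> \<alpha> \<le> hcost \<alpha> U + e"
proof (cases "\<alpha> = 0")
  case True
  then show thesis using assms by (intro that[of \<epsilon>]) (auto simp: hcost_def rpow_def)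
next
  case False
  define c where "c = hcost \<alpha> U"
  have diam_nonneg: "0 \<le> diameter U" by (simp add: diameter_ge_0 assms(3))
  then have diam: "diameter U = c powr (1/\<alpha>)"
    using False assms(2) by (simp add: c_def hcost_def rpow_def powr_powr)
  have c: "0 \<le> c" by (simp add: c_def hcost_nonneg)
  show thesis
  proof (rule that[of "min \<epsilon> ((c + e) powr (1/\<alpha>))"])
    show "diameter U < min \<epsilon> ((c + e) powr (1/\<alpha>))"
      unfolding min_less_iff_conj diam using assms c False diam
      by (auto intro!: powr_less_mono2)
    show "min \<epsilon> ((c + e) powr (1/\<alpha>)) \<le> \<epsilon>" by simp
    have "min \<epsilon> ((c + e) powr (1/\<alpha>)) powr \<alpha> \<le> ((c + e) powr (1/\<alpha>)) powr \<alpha>"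
      using False assms diam_nonneg by (intro powr_mono2) auto
    also have "\<dots> = c + e" using False c assms(5) by (simp add: powr_powr)
    finally show "rpow (min \<epsilon> ((c + e) powr (1/\<alpha>))) \<alpha> \<le> hcost \<alpha> U + e"
      using False by (simp add: rpow_def c_def)
  qed
qed

lemma compact_finite_ball_subcover:
  fixes K :: "'a::metric_space set"
  assumes "compact K" "K \<subseteq> (\<Union>i. U i)" "\<And>i. bounded (U i)"
    and "\<And>i. U i \<noteq> {} \<Longrightarrow> diameter (U i) < \<rho> i"
  obtains F x where "finite F" "\<And>i. i \<in> F \<Longrightarrow> x i \<in> U i \<inter> K"
    "K \<subseteq> (\<Union>i\<in>F. ball (x i) (\<rho> i))"
proof -
  define J where "J = {i. U i \<inter> K \<noteq> {}}"
  define x where "x i = (SOME y. y \<in> U i \<inter> K)" for i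
  have x: "x i \<in> U i \<inter> K" if "i \<in> J" for i
  proof -
    have "\<exists>y. y \<in> U i \<inter> K" using that unfolding J_def by blast
    then show ?thesis unfolding x_def by (rule someI_ex)
  qed
  have cover: "K \<subseteq> (\<Union>i\<in>J. ball (x i) (\<rho> i))"
  proof
    fix y assume y: "y \<in> K"
    then obtain i where i: "y \<in> U i" using assms(2) by blast
    then have "i \<in> J" using y by (auto simp: J_def)
    have "dist (x i) y \<le> diameter (U i)"
      using x[OF \<open>i \<in> J\<close>] i assms(3) by (intro diameter_bounded_bound) auto
    also have "\<dots> < \<rho> i" using assms(4) i by blast
    finally show "y \<in> (\<Union>i\<in>J. ball (x i) (\<rho> i))" using \<open>i \<in> J\<close> by auto
  qed
  obtain F where F: "F \<subseteq> J" "finite F" "K \<subseteq> (\<Union>i\<in>F. ball (x i) (\<rho> i))"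
    by (rule compactE_image[OF assms(1) _ cover]) auto
  show thesis
    by (rule that[OF F(2) _ F(3)]) (use x F(1) in blast)
qed

lemma ex_radii_above_diameters:
  assumes "0 \<le> \<alpha>" "\<And>i. bounded (U i)" "\<And>i. diameter (U i) < \<epsilon>"
    and "summable (\<lambda>i. hcost \<alpha> (U i))" "(\<Sum>i. hcost \<alpha> (U i)) < a"
  obtains \<rho> where "\<And>i. U i \<noteq> {} \<Longrightarrow> diameter (U i) < \<rho> i \<and> \<rho> i \<le> \<epsilon>"
    "\<And>F. finite F \<Longrightarrow> (\<And>i. i \<in> F \<Longrightarrow> U i \<noteq> {}) \<Longrightarrow> (\<Sum>i\<in>F. rpow (\<rho> i) \<alpha>) < a"
proof -
  define c where "c = (\<lambda>i. hcost \<alpha> (U i))"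
  have c_less: "suminf c < a" using assms(5) by (simp add: c_def)
  define \<eta> where "\<eta> = a - suminf c"
  define e where "e = (\<lambda>i. (\<eta>/2) * (1/2)^Suc i)"
  have e_pos: "0 < e i" for i
    using c_less by (simp add: e_def \<eta>_def)
  have e_sums: "e sums (\<eta>/2)"
    unfolding e_def using sums_mult[OF power_half_series, of "\<eta>/2"] by simp
  have "\<exists>\<rho>. U i \<noteq> {} \<longrightarrow> diameter (U i) < \<rho> \<and> \<rho> \<le> \<epsilon> \<and> rpow \<rho> \<alpha> \<le> c i + e i" for i
  proof (cases "U i = {}")
    case False
    then obtain \<rho> where "diameter (U i) < \<rho>" "\<rho> \<le> \<epsilon>" "rpow \<rho> \<alpha> \<le> hcost \<alpha> (U i) + e i"
      by (rule ex_radius_above_diameter[OF assms(1) _ assms(2,3) e_pos])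
    then show ?thesis by (auto simp: c_def)
  qed simp
  then obtain \<rho> where \<rho>: "\<And>i. U i \<noteq> {} \<Longrightarrow>
      diameter (U i) < \<rho> i \<and> \<rho> i \<le> \<epsilon> \<and> rpow (\<rho> i) \<alpha> \<le> c i + e i"
    by metis
  have "(\<Sum>i\<in>F. rpow (\<rho> i) \<alpha>) < a" if F: "finite F" "\<And>i. i \<in> F \<Longrightarrow> U i \<noteq> {}" for F
  proof -
    have "(\<Sum>i\<in>F. rpow (\<rho> i) \<alpha>) \<le> (\<Sum>i\<in>F. c i) + (\<Sum>i\<in>F. e i)"
      using \<rho> F(2) by (simp add: sum.distrib[symmetric] sum_mono)
    also have "\<dots> \<le> suminf c + \<eta>/2"
    proof (intro add_mono)
      show "(\<Sum>i\<in>F. c i) \<le> suminf c"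
        using assms(4) F(1) by (intro sum_le_suminf) (auto simp: c_def hcost_nonneg)
      show "(\<Sum>i\<in>F. e i) \<le> \<eta>/2"
        using e_sums e_pos F(1) sum_le_suminf[of e F] sums_summable[OF e_sums]
        by (simp add: sums_iff less_imp_le)
    qed
    also have "\<dots> < a" using c_less by (simp add: \<eta>_def field_simps)
    finally show ?thesis .
  qed
  with \<rho> show thesis by (intro that) auto
qed

lemma good_family_from_countable_cover:
  fixes K :: "'a::euclidean_space set" and U :: "nat \<Rightarrow> 'a set"
  assumes "0 \<le> \<alpha>" "compact K" "K \<subseteq> (\<Union>i. U i)"
    and "\<And>i. bounded (U i)" "\<And>i. diameter (U i) < \<epsilon>"
    and "summable (\<lambda>i. hcost \<alpha> (U i))" "(\<Sum>i. hcost \<alpha> (U i)) < a"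
  obtains B where "good_family \<alpha> K a \<epsilon> (card B) B"
proof -
  obtain \<rho> where \<rho>: "\<And>i. U i \<noteq> {} \<Longrightarrow> diameter (U i) < \<rho> i \<and> \<rho> i \<le> \<epsilon>"
    and sum_less: "\<And>F. finite F \<Longrightarrow> (\<And>i. i \<in> F \<Longrightarrow> U i \<noteq> {}) \<Longrightarrow> (\<Sum>i\<in>F. rpow (\<rho> i) \<alpha>) < a"
    using ex_radii_above_diameters[OF assms(1,4,5,6,7)] by blast
  have diam_less: "diameter (U i) < \<rho> i" if "U i \<noteq> {}" for i
    using \<rho>[OF that] by blast
  obtain F x where F: "finite F" "\<And>i. i \<in> F \<Longrightarrow> x i \<in> U i \<inter> K"
    "K \<subseteq> (\<Union>i\<in>F. ball (x i) (\<rho> i))"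
    using compact_finite_ball_subcover[OF assms(2,3,4) diam_less] by blast
  define B where "B = (\<lambda>i. (x i, \<rho> i)) ` F"
  have "family_cost \<alpha> B \<le> (\<Sum>i\<in>F. rpow (\<rho> i) \<alpha>)"
    unfolding B_def using sum_image_le[OF F(1), of "\<lambda>(x, r). rpow r \<alpha>" "\<lambda>i. (x i, \<rho> i)"]
    by (simp add: rpow_nonneg o_def)
  also have "\<dots> < a"
    using F(1,2) by (intro sum_less) auto
  finally have "family_cost \<alpha> B < a" .
  moreover have "K \<subseteq> (\<Union>(x, r)\<in>B. cball x r)"
  proof
    fix y assume "y \<in> K"
    then obtain i where "i \<in> F" "y \<in> ball (x i) (\<rho> i)" using F(3) by blast
    then show "y \<in> (\<Union>(x, r)\<in>B. cball x r)" unfolding B_def by force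
  qed
  moreover have "x i \<in> K \<and> 0 \<le> \<rho> i \<and> \<rho> i \<le> \<epsilon>" if "i \<in> F" for i
  proof -
    have "U i \<noteq> {}" using F(2)[OF that] by blast
    then show ?thesis using F(2)[OF that] \<rho> diameter_ge_0[OF assms(4)[of i]] by force
  qed
  then have "\<forall>(x, r)\<in>B. x \<in> K \<and> 0 \<le> r \<and> r \<le> \<epsilon>"
    unfolding B_def by blast
  ultimately show thesis
    using F(1) by (intro that[of B]) (simp add: good_family_def B_def)
qed

lemma ex_good_family:
  fixes K :: "'a::euclidean_space set"
  assumes "0 \<le> \<alpha>" "compact K" "hausdorff_measure \<alpha> K < ennreal a" "\<epsilon> > 0"
  obtains B where "good_family \<alpha> K a \<epsilon> (card B) B"
proof -
  obtain U :: "nat \<Rightarrow> 'a set" where U: "K \<subseteq> (\<Union>i. U i)" "\<And>i. bounded (U i)"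
    "\<And>i. diameter (U i) \<le> \<epsilon>/2" "summable (\<lambda>i. hcost \<alpha> (U i))" "(\<Sum>i. hcost \<alpha> (U i)) < a"
    using hausdorff_measure_less_imp_cover[OF assms(3), of "\<epsilon>/2"] assms(4) by auto
  have "diameter (U i) < \<epsilon>" for i
    using U(3)[of i] assms(4) by linarith
  then show thesis
    by (rule good_family_from_countable_cover[OF assms(1,2) U(1,2) _ U(4,5)]) (rule that)
qed

text \<open>Entries beyond \<open>M\<close> are frozen at \<open>0\<close>, so that these tuples form a compact subset of
  the product space \<open>nat \<Rightarrow> 'a \<times> real\<close>.\<close>
definition covering_tuples :: "'a::euclidean_space set \<Rightarrow> real \<Rightarrow> nat \<Rightarrow> (nat \<Rightarrow> 'a \<times> real) set"
  where "covering_tuples K \<epsilon> M =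
    {f. (\<forall>i<M. f i \<in> K \<times> {0..\<epsilon>}) \<and> (\<forall>i\<ge>M. f i = 0) \<and>
        K \<subseteq> (\<Union>i<M. cball (fst (f i)) (snd (f i)))}"

lemma compact_covering_tuples:
  assumes "compact K"
  shows "compact (covering_tuples K \<epsilon> M)"
proof -
  have eq: "covering_tuples K \<epsilon> M = PiE UNIV (\<lambda>i. if i < M then K \<times> {0..\<epsilon>} else {0})
      \<inter> {f. K \<subseteq> (\<Union>i<M. cball (fst (f i)) (snd (f i)))}"
    by (auto simp: covering_tuples_def PiE_UNIV_domain Pi_iff split: if_splits)
  have "compactin (product_topology (\<lambda>i. euclidean) UNIV)
          (PiE UNIV (\<lambda>i. if i < M then K \<times> {0..\<epsilon>} else {0}))"
    unfolding compactin_PiE using assms by (auto intro: compact_Times)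
  then have "compact (PiE UNIV (\<lambda>i. if i < M then K \<times> {0..\<epsilon>} else {0::'a \<times> real}))"
    by (simp add: euclidean_product_topology)
  moreover have "closed {f. K \<subseteq> (\<Union>i<M. cball (fst (f i)) (snd (f i)))}"
  proof -
    have "open {p :: 'a \<times> real. snd p < dist (fst p) y}" for y
      by (intro open_Collect_less continuous_intros)
    moreover have complement: "- {f. K \<subseteq> (\<Union>i<M. cball (fst (f i)) (snd (f i)))}
        = (\<Union>y\<in>K. {f. \<forall>i\<in>{..<M}. f (id i) \<in> {p. snd p < dist (fst p) y}})"
      by (auto simp: subset_iff not_le; meson not_le)
    ultimately show ?thesis
      unfolding closed_def complement by (intro open_UN ballI product_topology_basis') auto
  qed
  ultimately show ?thesis unfolding eq by (rule compact_Int_closed)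
qed

lemma continuous_on_covering_tuples_cost:
  assumes "\<alpha> > 0"
  shows "continuous_on (covering_tuples K \<epsilon> M) (tuple_cost \<alpha> M)"
proof (intro continuous_on_sum)
  fix i assume "i \<in> {..<M}"
  then have "\<forall>f\<in>covering_tuples K \<epsilon> M. 0 \<le> snd (f i)"
    by (auto simp: covering_tuples_def mem_Times_iff)
  moreover have "continuous_on (covering_tuples K \<epsilon> M) (\<lambda>f. snd (f i))"
    by (intro continuous_on_snd continuous_on_subset[OF continuous_on_product_coordinates]) auto
  ultimately show "continuous_on (covering_tuples K \<epsilon> M) (\<lambda>f. rpow (snd (f i)) \<alpha>)"
    using assms unfolding rpow_def by (auto intro!: continuous_on_powr' continuous_on_const)
qed

lemma good_family_imp_covering_tuple:
  assumes "good_family \<alpha> K a \<epsilon> M B"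
  obtains f where "f \<in> covering_tuples K \<epsilon> M" "tuple_cost \<alpha> M f = family_cost \<alpha> B"
proof -
  have B: "finite B" "card B = M" "K \<subseteq> (\<Union>(x, r)\<in>B. cball x r)"
    "\<forall>(x, r)\<in>B. x \<in> K \<and> 0 \<le> r \<and> r \<le> \<epsilon>"
    using assms unfolding good_family_def by auto
  obtain h where h: "bij_betw h {..<M} B"
    using ex_bij_betw_nat_finite[OF B(1)] B(2) atLeast0LessThan by auto
  define f where "f i = (if i < M then h i else 0)" for i
  have "f \<in> covering_tuples K \<epsilon> M"
  proof -
    have "K \<subseteq> (\<Union>i<M. cball (fst (f i)) (snd (f i)))"
    proof
      fix y assume "y \<in> K"
      then obtain p where p: "p \<in> B" "y \<in> cball (fst p) (snd p)" using B(3) by auto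
      then obtain i where "i < M" "h i = p" using h unfolding bij_betw_def by auto
      then show "y \<in> (\<Union>i<M. cball (fst (f i)) (snd (f i)))" using p unfolding f_def by auto
    qed
    moreover have "h i \<in> K \<times> {0..\<epsilon>}" if "i < M" for i
    proof -
      have "h i \<in> B" using h that by (auto simp: bij_betw_def)
      then show ?thesis using B(4) by (auto simp: mem_Times_iff)
    qed
    ultimately show ?thesis by (auto simp: covering_tuples_def f_def)
  qed
  moreover have "tuple_cost \<alpha> M f = family_cost \<alpha> B"
  proof -
    have "tuple_cost \<alpha> M f = (\<Sum>i<M. (\<lambda>(x, r). rpow r \<alpha>) (h i))"
      by (intro sum.cong) (auto simp: f_def case_prod_beta)
    also have "\<dots> = family_cost \<alpha> B" by (rule sum.reindex_bij_betw[OF h])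
    finally show ?thesis .
  qed
  ultimately show thesis by (rule that)
qed

lemma infinite_extend_to_card:
  assumes "infinite A" "finite B" "card B \<le> n"
  obtains C where "B \<subseteq> C" "C \<subseteq> B \<union> A" "finite C" "card C = n"
proof -
  have "infinite (A - B)" using assms(1,2) by (simp add: Diff_infinite_finite)
  then obtain Z where Z: "finite Z" "card Z = n - card B" "Z \<subseteq> A - B"
    using infinite_arbitrarily_large by blast
  have "card (B \<union> Z) = n"
    using Z assms(2,3) by (subst card_Un_disjoint) auto
  with Z(1,3) assms(2) show thesis by (intro that[of "B \<union> Z"]) auto
qed

text \<open>A minimising tuple may repeat a ball; the repetitions are replaced by balls of radius 0
  around fresh points of \<open>K\<close>, which cost nothing when \<open>\<alpha> \<noteq> 0\<close>.\<close>
lemma covering_tuple_imp_family: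
  assumes "\<alpha> \<noteq> 0" "infinite K" "0 \<le> \<epsilon>" "f \<in> covering_tuples K \<epsilon> M"
  obtains B where "finite B" "card B = M" "K \<subseteq> (\<Union>(x, r)\<in>B. cball x r)"
    "\<forall>(x, r)\<in>B. x \<in> K \<and> 0 \<le> r \<and> r \<le> \<epsilon>"
    "family_cost \<alpha> B \<le> tuple_cost \<alpha> M f"
proof -
  have f: "\<And>i. i < M \<Longrightarrow> f i \<in> K \<times> {0..\<epsilon>}"
    "K \<subseteq> (\<Union>i<M. cball (fst (f i)) (snd (f i)))"
    using assms(4) by (auto simp: covering_tuples_def)
  define Z where "Z = (\<lambda>x. (x, 0::real)) ` K"
  have "infinite Z"
    using assms(2) finite_imageD[of "\<lambda>x. (x, 0::real)" K] by (auto simp: Z_def inj_on_def)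
  moreover have "card (f ` {..<M}) \<le> M"
    using card_image_le[of "{..<M}" f] by simp
  ultimately obtain B where B: "f ` {..<M} \<subseteq> B" "B \<subseteq> f ` {..<M} \<union> Z" "finite B" "card B = M"
    by (elim infinite_extend_to_card) auto
  have "K \<subseteq> (\<Union>(x, r)\<in>B. cball x r)"
    using f(2) B(1) by fastforce
  moreover have "\<forall>(x, r)\<in>B. x \<in> K \<and> 0 \<le> r \<and> r \<le> \<epsilon>"
    using B(2) f(1) assms(3) by (fastforce simp: Z_def mem_Times_iff)
  moreover have "family_cost \<alpha> B \<le> tuple_cost \<alpha> M f"
  proof -
    have "family_cost \<alpha> B = family_cost \<alpha> (f ` {..<M}) + family_cost \<alpha> (B - f ` {..<M})"
      using B(1,3) by (simp add: sum.subset_diff)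
    also have "family_cost \<alpha> (B - f ` {..<M}) = 0"
      using B(2) assms(1) by (intro sum.neutral) (auto simp: Z_def rpow_def)
    also have "family_cost \<alpha> (f ` {..<M}) \<le> tuple_cost \<alpha> M f"
      using sum_image_le[of "{..<M}" "\<lambda>(x, r). rpow r \<alpha>" f]
      by (simp add: rpow_nonneg case_prod_beta o_def)
    finally show ?thesis by simp
  qed
  ultimately show thesis by (rule that[OF B(3,4)])
qed

lemma ex_minimal_good_family:
  fixes K :: "'a::euclidean_space set"
  assumes "\<alpha> > 0" "compact K" "infinite K" "0 \<le> \<epsilon>" "good_family \<alpha> K a \<epsilon> M B\<^sub>0"
  obtains B where "good_family \<alpha> K a \<epsilon> M B"
    "\<And>B'. good_family \<alpha> K a \<epsilon> M B' \<Longrightarrow> family_cost \<alpha> B \<le> family_cost \<alpha> B'"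
proof -
  obtain f\<^sub>0 where f\<^sub>0: "f\<^sub>0 \<in> covering_tuples K \<epsilon> M" "tuple_cost \<alpha> M f\<^sub>0 = family_cost \<alpha> B\<^sub>0"
    using good_family_imp_covering_tuple[OF assms(5)] by blast
  obtain f where f: "f \<in> covering_tuples K \<epsilon> M"
      "\<And>g. g \<in> covering_tuples K \<epsilon> M \<Longrightarrow> tuple_cost \<alpha> M f \<le> tuple_cost \<alpha> M g"
    using continuous_attains_inf[OF compact_covering_tuples[OF assms(2)] _
        continuous_on_covering_tuples_cost[OF assms(1)]] f\<^sub>0(1)
    by blast
  have "\<alpha> \<noteq> 0" using assms(1) by simp
  then obtain B where B: "finite B" "card B = M" "K \<subseteq> (\<Union>(x, r)\<in>B. cball x r)"
    "\<forall>(x, r)\<in>B. x \<in> K \<and> 0 \<le> r \<and> r \<le> \<epsilon>" "family_cost \<alpha> B \<le> tuple_cost \<alpha> M f"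
    by (rule covering_tuple_imp_family[OF _ assms(3,4) f(1)])
  have "family_cost \<alpha> B\<^sub>0 < a" using assms(5) by (simp add: good_family_def)
  then have "good_family \<alpha> K a \<epsilon> M B"
    using B f(2)[OF f\<^sub>0(1)] f\<^sub>0(2) by (simp add: good_family_def)
  moreover have "family_cost \<alpha> B \<le> family_cost \<alpha> B'" if B': "good_family \<alpha> K a \<epsilon> M B'" for B'
  proof -
    obtain g where g: "g \<in> covering_tuples K \<epsilon> M" "tuple_cost \<alpha> M g = family_cost \<alpha> B'"
      using good_family_imp_covering_tuple[OF B'] by blast
    then show ?thesis using B(5) f(2)[OF g(1)] by linarith
  qed
  ultimately show thesis by (rule that)
qed

theorem lemma9:
  fixes K :: "'a::euclidean_space set" and \<alpha> a \<epsilon> :: real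
  assumes "\<alpha> \<ge> 0" and "compact K" and "a > 0"
    and "hausdorff_measure \<alpha> K < ennreal a" and "\<epsilon> > 0"
  shows "\<exists>M::nat. \<exists>B :: ('a \<times> real) set.
           K \<subseteq> (\<Union>(x, r)\<in>B. cball x r) \<and>
           (\<forall>(x, r)\<in>B. x \<in> K \<and> 0 \<le> r \<and> r \<le> \<epsilon>) \<and>
           finite B \<and> card B = M \<and> (\<Sum>(x, r)\<in>B. rpow r \<alpha>) < a \<and>
           (\<forall>B'. good_family \<alpha> K a \<epsilon> M B' \<longrightarrow>
                 (\<Sum>(x, r)\<in>B. rpow r \<alpha>) \<le> (\<Sum>(x, r)\<in>B'. rpow r \<alpha>))"
proof -
  obtain B\<^sub>0 where B\<^sub>0: "good_family \<alpha> K a \<epsilon> (card B\<^sub>0) B\<^sub>0"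
    using ex_good_family[OF assms(1,2,4,5)] .
  have "\<exists>M B. good_family \<alpha> K a \<epsilon> M B \<and>
      (\<forall>B'. good_family \<alpha> K a \<epsilon> M B' \<longrightarrow> family_cost \<alpha> B \<le> family_cost \<alpha> B')"
  proof (cases "\<alpha> = 0")
    case True
    then have cost: "family_cost \<alpha> B = card B" for B by (simp add: rpow_def case_prod_beta)
    have "family_cost \<alpha> B\<^sub>0 \<le> family_cost \<alpha> B'" if "good_family \<alpha> K a \<epsilon> (card B\<^sub>0) B'" for B'
      using that unfolding cost by (simp add: good_family_def)
    with B\<^sub>0 show ?thesis by blast
  next
    case False
    show ?thesis
    proof (cases "finite K")
      case True
      define B where "B = (\<lambda>x. (x, 0::real)) ` K"
      have "family_cost \<alpha> B = 0"
        using False by (simp add: B_def rpow_def sum.reindex inj_on_def)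
      then have "good_family \<alpha> K a \<epsilon> (card B) B"
        using True assms(3,5) by (auto simp: good_family_def B_def)
      then show ?thesis using family_cost_nonneg \<open>family_cost \<alpha> B = 0\<close> by metis
    next
      case infinite: False
      have "\<alpha> > 0" using False assms(1) by simp
      then obtain B where "good_family \<alpha> K a \<epsilon> (card B\<^sub>0) B"
        "\<And>B'. good_family \<alpha> K a \<epsilon> (card B\<^sub>0) B' \<Longrightarrow> family_cost \<alpha> B \<le> family_cost \<alpha> B'"
        using ex_minimal_good_family[OF _ assms(2) infinite _ B\<^sub>0] assms(5) by auto
      then show ?thesis by blast
    qed
  qed
  then show ?thesis unfolding good_family_def by blast
qed

end
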